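(* A (connected) set Hopf monoid $(\mathbf{H},m,\Delta)$ is self-adjoint with respect to some poset structure if and only if it is commutative and cocommutative.
   Context: A (connected) set species $\mathbf{H}$ assigns to each finite set $I$ a finite set $\mathbf{H}[I]$, $\mathbf{H}[\emptyset]=\{1\}$, and to each bijection a bijection, functorially. A set Hopf monoid has maps $m_{S,T}:\mathbf{H}[S]\times\mathbf{H}[T]\to\mathbf{H}[S\sqcup T]$ (natural, associative, unital) and $\Delta_{S,T}:\mathbf{H}[S\sqcup T]\to\mathbf{H}[S]\times\mathbf{H}[T]$ (natural, coassociative, counital), satisfying compatibility: for $I=S_1\sqcup S_2=T_1\sqcup T_2$, $A=S_1\cap T_1$, $B=S_1\cap T_2$, $C=S_2\cap T_1$, $D=S_2\cap T_2$, if $\Delta_{A,B}(x)=(x_A,x_B)$, $\Delta_{C,D}(y)=(y_C,y_D)$ then $\Delta_{T_1,T_2}(m_{S_1,S_2}(x,y))=(m_{A,C}(x_A,y_C),m_{B,D}(x_B,y_D))$. Commutative: $m_{S,T}(x,y)=m_{T,S}(y,x)$; cocommutative: $\Delta_{S,T}(x)=(y,z)\iff\Delta_{T,S}(x)=(z,y)$. "Self-adjoint with respect to some poset structure" means there exist partial orders on the sets $\mathbf{H}[I]$ such that all relabelling bijections, all $m_{S,T}$ and all $\Delta_{S,T}$ are order-preserving (product orders on products), and for all $S,T$ the maps $m_{S,T}$ and $\Delta_{S,T}$ form a Galois connection (either $\Delta_{S,T}(x)\le(y,z)\iff x\le m_{S,T}(y,z)$ for all $x,y,z$, or $m_{S,T}(y,z)\le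 x\iff(y,z)\le\Delta_{S,T}(x)$ for all $x,y,z$). *)

theory Defs
  imports Main
begin

text \<open>H I is the finite set H[I] (for finite I); rl \<sigma> I is the relabelling H[\<sigma>] along the
  bijection from I onto \<sigma> ` I given by restricting \<sigma> to I (with inj_on \<sigma> I).\<close>

definition set_species :: "('l set \<Rightarrow> 'a set) \<Rightarrow> (('l \<Rightarrow> 'l) \<Rightarrow> 'l set \<Rightarrow> 'a \<Rightarrow> 'a) \<Rightarrow> 'a \<Rightarrow> bool" where
  "set_species H rl e \<longleftrightarrow>
     H {} = {e} \<and>
     (\<forall>I. finite I \<longrightarrow> finite (H I)) \<and>
     (\<forall>I \<sigma> x. finite I \<and> inj_on \<sigma> I \<and> x \<in> H I \<longrightarrow> rl \<sigma> I x \<in> H (\<sigma> ` I)) \<and>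
     (\<forall>I \<sigma> \<tau> x. finite I \<and> inj_on \<sigma> I \<and> (\<forall>i\<in>I. \<sigma> i = \<tau> i) \<and> x \<in> H I
          \<longrightarrow> rl \<sigma> I x = rl \<tau> I x) \<and>
     (\<forall>I x. finite I \<and> x \<in> H I \<longrightarrow> rl id I x = x) \<and>
     (\<forall>I \<sigma> \<tau> x. finite I \<and> inj_on \<sigma> I \<and> inj_on \<tau> (\<sigma> ` I) \<and> x \<in> H I
          \<longrightarrow> rl (\<tau> \<circ> \<sigma>) I x = rl \<tau> (\<sigma> ` I) (rl \<sigma> I x))"

definition set_monoid_ax ::
  "('l set \<Rightarrow> 'a set) \<Rightarrow> (('l \<Rightarrow> 'l) \<Rightarrow> 'l set \<Rightarrow> 'a \<Rightarrow> 'a) \<Rightarrow> 'a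
   \<Rightarrow> ('l set \<Rightarrow> 'l set \<Rightarrow> 'a \<Rightarrow> 'a \<Rightarrow> 'a) \<Rightarrow> bool" where
  "set_monoid_ax H rl e m \<longleftrightarrow>
     (\<forall>S T x y. finite S \<and> finite T \<and> S \<inter> T = {} \<and> x \<in> H S \<and> y \<in> H T
        \<longrightarrow> m S T x y \<in> H (S \<union> T)) \<and>
     (\<forall>S T \<sigma> x y. finite S \<and> finite T \<and> S \<inter> T = {} \<and> inj_on \<sigma> (S \<union> T) \<and> x \<in> H S \<and> y \<in> H T
        \<longrightarrow> rl \<sigma> (S \<union> T) (m S T x y) = m (\<sigma> ` S) (\<sigma> ` T) (rl \<sigma> S x) (rl \<sigma> T y)) \<and>
     (\<forall>R S T x y z. finite R \<and> finite S \<and> finite T \<and> R \<inter> S = {} \<and> R \<inter> T = {} \<and> S \<inter> T = {}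
        \<and> x \<in> H R \<and> y \<in> H S \<and> z \<in> H T
        \<longrightarrow> m (R \<union> S) T (m R S x y) z = m R (S \<union> T) x (m S T y z)) \<and>
     (\<forall>I x. finite I \<and> x \<in> H I \<longrightarrow> m {} I e x = x \<and> m I {} x e = x)"

definition set_comonoid_ax ::
  "('l set \<Rightarrow> 'a set) \<Rightarrow> (('l \<Rightarrow> 'l) \<Rightarrow> 'l set \<Rightarrow> 'a \<Rightarrow> 'a) \<Rightarrow> 'a
   \<Rightarrow> ('l set \<Rightarrow> 'l set \<Rightarrow> 'a \<Rightarrow> 'a \<times> 'a) \<Rightarrow> bool" where
  "set_comonoid_ax H rl e \<Delta> \<longleftrightarrow>
     (\<forall>S T x. finite S \<and> finite T \<and> S \<inter> T = {} \<and> x \<in> H (S \<union> T)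
        \<longrightarrow> \<Delta> S T x \<in> H S \<times> H T) \<and>
     (\<forall>S T \<sigma> x. finite S \<and> finite T \<and> S \<inter> T = {} \<and> inj_on \<sigma> (S \<union> T) \<and> x \<in> H (S \<union> T)
        \<longrightarrow> \<Delta> (\<sigma> ` S) (\<sigma> ` T) (rl \<sigma> (S \<union> T) x) = map_prod (rl \<sigma> S) (rl \<sigma> T) (\<Delta> S T x)) \<and>
     (\<forall>R S T x. finite R \<and> finite S \<and> finite T \<and> R \<inter> S = {} \<and> R \<inter> T = {} \<and> S \<inter> T = {}
        \<and> x \<in> H (R \<union> S \<union> T)
        \<longrightarrow> fst (\<Delta> R S (fst (\<Delta> (R \<union> S) T x))) = fst (\<Delta> R (S \<union> T) x)
          \<and> snd (\<Delta> R S (fst (\<Delta> (R \<union> S) T x))) = fst (\<Delta> S T (snd (\<Delta> R (S \<union> T) x)))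
          \<and> snd (\<Delta> (R \<union> S) T x) = snd (\<Delta> S T (snd (\<Delta> R (S \<union> T) x)))) \<and>
     (\<forall>I x. finite I \<and> x \<in> H I \<longrightarrow> \<Delta> {} I x = (e, x) \<and> \<Delta> I {} x = (x, e))"

definition hopf_compat ::
  "('l set \<Rightarrow> 'a set) \<Rightarrow> ('l set \<Rightarrow> 'l set \<Rightarrow> 'a \<Rightarrow> 'a \<Rightarrow> 'a)
   \<Rightarrow> ('l set \<Rightarrow> 'l set \<Rightarrow> 'a \<Rightarrow> 'a \<times> 'a) \<Rightarrow> bool" where
  "hopf_compat H m \<Delta> \<longleftrightarrow>
     (\<forall>S1 S2 T1 T2 x y. finite S1 \<and> finite S2 \<and> S1 \<inter> S2 = {} \<and> T1 \<inter> T2 = {}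
        \<and> S1 \<union> S2 = T1 \<union> T2 \<and> x \<in> H S1 \<and> y \<in> H S2
        \<longrightarrow> \<Delta> T1 T2 (m S1 S2 x y) =
             (m (S1 \<inter> T1) (S2 \<inter> T1) (fst (\<Delta> (S1 \<inter> T1) (S1 \<inter> T2) x)) (fst (\<Delta> (S2 \<inter> T1) (S2 \<inter> T2) y)),
              m (S1 \<inter> T2) (S2 \<inter> T2) (snd (\<Delta> (S1 \<inter> T1) (S1 \<inter> T2) x)) (snd (\<Delta> (S2 \<inter> T1) (S2 \<inter> T2) y))))"

text \<open>Connected set Hopf monoid (connectedness: H {} = {e}, included in set_species).\<close>
definition set_hopf_monoid ::
  "('l set \<Rightarrow> 'a set) \<Rightarrow> (('l \<Rightarrow> 'l) \<Rightarrow> 'l set \<Rightarrow> 'a \<Rightarrow> 'a) \<Rightarrow> 'a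
   \<Rightarrow> ('l set \<Rightarrow> 'l set \<Rightarrow> 'a \<Rightarrow> 'a \<Rightarrow> 'a) \<Rightarrow> ('l set \<Rightarrow> 'l set \<Rightarrow> 'a \<Rightarrow> 'a \<times> 'a) \<Rightarrow> bool" where
  "set_hopf_monoid H rl e m \<Delta> \<longleftrightarrow>
     set_species H rl e \<and> set_monoid_ax H rl e m \<and> set_comonoid_ax H rl e \<Delta> \<and> hopf_compat H m \<Delta>"

definition hopf_commutative ::
  "('l set \<Rightarrow> 'a set) \<Rightarrow> ('l set \<Rightarrow> 'l set \<Rightarrow> 'a \<Rightarrow> 'a \<Rightarrow> 'a) \<Rightarrow> bool" where
  "hopf_commutative H m \<longleftrightarrow>
     (\<forall>S T x y. finite S \<and> finite T \<and> S \<inter> T = {} \<and> x \<in> H S \<and> y \<in> H T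
        \<longrightarrow> m S T x y = m T S y x)"

definition hopf_cocommutative ::
  "('l set \<Rightarrow> 'a set) \<Rightarrow> ('l set \<Rightarrow> 'l set \<Rightarrow> 'a \<Rightarrow> 'a \<times> 'a) \<Rightarrow> bool" where
  "hopf_cocommutative H \<Delta> \<longleftrightarrow>
     (\<forall>S T x y z. finite S \<and> finite T \<and> S \<inter> T = {} \<and> x \<in> H (S \<union> T)
        \<longrightarrow> (\<Delta> S T x = (y, z) \<longleftrightarrow> \<Delta> T S x = (z, y)))"

definition poset_on :: "'a set \<Rightarrow> ('a \<Rightarrow> 'a \<Rightarrow> bool) \<Rightarrow> bool" where
  "poset_on P le \<longleftrightarrow>
     (\<forall>x\<in>P. le x x) \<and> (\<forall>x\<in>P. \<forall>y\<in>P. le x y \<and> le y x \<longrightarrow> x = y) \<and>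
     (\<forall>x\<in>P. \<forall>y\<in>P. \<forall>z\<in>P. le x y \<and> le y z \<longrightarrow> le x z)"

definition prod_le :: "('l set \<Rightarrow> 'a \<Rightarrow> 'a \<Rightarrow> bool) \<Rightarrow> 'l set \<Rightarrow> 'l set \<Rightarrow> 'a \<times> 'a \<Rightarrow> 'a \<times> 'a \<Rightarrow> bool" where
  "prod_le le S T p q \<longleftrightarrow> le S (fst p) (fst q) \<and> le T (snd p) (snd q)"

definition self_adjoint ::
  "('l set \<Rightarrow> 'a set) \<Rightarrow> (('l \<Rightarrow> 'l) \<Rightarrow> 'l set \<Rightarrow> 'a \<Rightarrow> 'a)
   \<Rightarrow> ('l set \<Rightarrow> 'l set \<Rightarrow> 'a \<Rightarrow> 'a \<Rightarrow> 'a) \<Rightarrow> ('l set \<Rightarrow> 'l set \<Rightarrow> 'a \<Rightarrow> 'a \<times> 'a) \<Rightarrow> bool" where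
  "self_adjoint H rl m \<Delta> \<longleftrightarrow>
    (\<exists>le :: 'l set \<Rightarrow> 'a \<Rightarrow> 'a \<Rightarrow> bool.
       (\<forall>I. finite I \<longrightarrow> poset_on (H I) (le I)) \<and>
       (\<forall>I \<sigma> x x'. finite I \<and> inj_on \<sigma> I \<and> x \<in> H I \<and> x' \<in> H I \<and> le I x x'
          \<longrightarrow> le (\<sigma> ` I) (rl \<sigma> I x) (rl \<sigma> I x')) \<and>
       (\<forall>S T x x' y y'. finite S \<and> finite T \<and> S \<inter> T = {} \<and> x \<in> H S \<and> x' \<in> H S \<and> y \<in> H T \<and> y' \<in> H T
          \<and> le S x x' \<and> le T y y' \<longrightarrow> le (S \<union> T) (m S T x y) (m S T x' y')) \<and>
       (\<forall>S T x x'. finite S \<and> finite T \<and> S \<inter> T = {} \<and> x \<in> H (S \<union> T) \<and> x' \<in> H (S \<union> T)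
          \<and> le (S \<union> T) x x' \<longrightarrow> prod_le le S T (\<Delta> S T x) (\<Delta> S T x')) \<and>
       (\<forall>S T. finite S \<and> finite T \<and> S \<inter> T = {} \<longrightarrow>
          (\<forall>x\<in>H (S \<union> T). \<forall>y\<in>H S. \<forall>z\<in>H T.
              prod_le le S T (\<Delta> S T x) (y, z) \<longleftrightarrow> le (S \<union> T) x (m S T y z))
        \<or> (\<forall>x\<in>H (S \<union> T). \<forall>y\<in>H S. \<forall>z\<in>H T.
              le (S \<union> T) (m S T y z) x \<longleftrightarrow> prod_le le S T (y, z) (\<Delta> S T x))))"

end

theory Submission
  imports Defs
begin

text \<open>If \<open>m\<close> and \<open>\<Delta>\<close> are adjoint, evaluating the Galois connection at \<open>m\<^sub>T\<^sub>,\<^sub>S(z, y)\<close>, whose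
  coproduct \<open>\<Delta>\<^sub>S\<^sub>,\<^sub>T\<close> is \<open>(y, z)\<close>, shows that \<open>m\<^sub>T\<^sub>,\<^sub>S(z, y)\<close> lies on one fixed side of
  \<open>m\<^sub>S\<^sub>,\<^sub>T(y, z)\<close> for all \<open>y, z\<close>. When \<open>|S| = |T|\<close>, relabelling along an involution exchanging
  \<open>S\<close> and \<open>T\<close> is an order automorphism that reverses this inequality, so the two products agree;
  the coproduct is handled in the same way. Disjoint fresh copies \<open>S'\<close>, \<open>T'\<close> (this is where
  infinitely many labels are needed) reduce the general case to the balanced pair \<open>S \<union> T'\<close>,
  \<open>T \<union> S'\<close>, from which the coproduct restricts back.

  Conversely, for a commutative and cocommutative monoid the maps \<open>m\<^sub>A\<^sub>,\<^sub>B \<circ> \<Delta>\<^sub>A\<^sub>,\<^sub>B\<close> are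
  commuting idempotents of \<open>H[I]\<close>. Let \<open>x \<le> y\<close> mean that \<open>x\<close> arises from \<open>y\<close> by finitely many
  of them. Along such a chain the set of splits fixing the element can only grow, and a step
  by a split that already fixes the element does nothing, which gives antisymmetry; the
  second form of the Galois connection then follows from the compatibility axiom.\<close>

lemma rtranclp_map:
  assumes step: "\<And>x y. r x y \<Longrightarrow> s (f x) (f y)" and "r\<^sup>*\<^sup>* x y"
  shows "s\<^sup>*\<^sup>* (f x) (f y)"
  using assms(2) by induction (auto intro: rtranclp.rtrancl_into_rtrancl step)

lemma obtain_fresh_copy:
  assumes "infinite (UNIV :: 'l set)" and "finite F" and "finite T"
  obtains \<tau> :: "'l \<Rightarrow> 'l" where "inj_on \<tau> T" and "\<tau> ` T \<inter> F = {}"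
proof -
  have "infinite (UNIV - F)"
    using assms(1,2) by (simp add: Diff_infinite_finite)
  then obtain B where B: "B \<subseteq> UNIV - F" "finite B" "card B = card T"
    using infinite_arbitrarily_large by blast
  from B(2,3) assms(3) obtain \<tau> where "bij_betw \<tau> T B"
    by (metis finite_same_card_bij)
  then have "inj_on \<tau> T" and "\<tau> ` T \<subseteq> UNIV - F"
    using B(1) by (auto simp: bij_betw_def)
  then show ?thesis
    by (intro that) auto
qed

lemma obtain_fresh_copies:
  assumes "infinite (UNIV :: 'l set)" and "finite S" and "finite T"
  obtains \<tau> \<rho> :: "'l \<Rightarrow> 'l" and T' S'
  where "inj_on \<tau> T" and "\<tau> ` T = T'" and "inj_on \<rho> S" and "\<rho> ` S = S'"
    and "T' \<inter> (S \<union> T) = {}" and "S' \<inter> (S \<union> T \<union> T') = {}"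
proof -
  obtain \<tau> where \<tau>: "inj_on \<tau> T" "\<tau> ` T \<inter> (S \<union> T) = {}"
    using obtain_fresh_copy[OF assms(1) _ assms(3), of "S \<union> T"] assms(2,3) by blast
  obtain \<rho> where \<rho>: "inj_on \<rho> S" "\<rho> ` S \<inter> (S \<union> T \<union> \<tau> ` T) = {}"
    using obtain_fresh_copy[OF assms(1) _ assms(2), of "S \<union> T \<union> \<tau> ` T"] assms(2,3) by blast
  show ?thesis
    by (rule that[OF \<tau>(1) refl \<rho>(1) refl \<tau>(2) \<rho>(2)])
qed

lemma obtain_swapping_involution:
  assumes "finite S" and "finite T" and "S \<inter> T = {}" and "card S = card T"
  obtains \<sigma> :: "'a \<Rightarrow> 'a" where "\<sigma> \<circ> \<sigma> = id" and "\<sigma> ` S = T"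
proof -
  obtain f where f: "bij_betw f S T"
    using finite_same_card_bij assms by metis
  define g where "g = inv_into S f"
  have g: "bij_betw g T S"
    unfolding g_def using f by (rule bij_betw_inv_into)
  define \<sigma> where "\<sigma> i = (if i \<in> S then f i else if i \<in> T then g i else i)" for i
  have "\<sigma> (\<sigma> i) = i" for i
  proof -
    consider "i \<in> S" | "i \<in> T" | "i \<notin> S \<union> T"
      by blast
    then show ?thesis
    proof cases
      case 1
      then have "f i \<in> T" "f i \<notin> S"
        using f assms(3) by (auto simp: bij_betw_def)
      then show ?thesis
        using 1 f by (simp add: \<sigma>_def g_def bij_betw_def)
    next
      case 2
      then have "i \<notin> S" "g i \<in> S" "f (g i) = i"
        using f g assms(3) by (auto simp: bij_betw_def g_def f_inv_into_f)
      then show ?thesis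
        by (simp add: \<sigma>_def)
    qed (simp add: \<sigma>_def)
  qed
  moreover have "\<sigma> ` S = T"
    using f by (auto simp: \<sigma>_def bij_betw_def)
  ultimately show ?thesis
    by (intro that) (auto simp: fun_eq_iff)
qed

lemma involution_inj_on:
  assumes "\<sigma> \<circ> \<sigma> = id"
  shows "inj_on \<sigma> X"
proof (rule inj_onI)
  fix x y
  assume "\<sigma> x = \<sigma> y"
  then have "(\<sigma> \<circ> \<sigma>) x = (\<sigma> \<circ> \<sigma>) y"
    by simp
  then show "x = y"
    using assms by simp
qed

lemma involution_image_swap:
  assumes "\<sigma> \<circ> \<sigma> = id" and "\<sigma> ` S = T"
  shows "\<sigma> ` T = S"
proof -
  have "\<sigma> ` T = (\<sigma> \<circ> \<sigma>) ` S"
    by (simp flip: assms(2) add: image_comp)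
  then show ?thesis
    using assms(1) by simp
qed

locale set_hopf =
  fixes H :: "'l set \<Rightarrow> 'a set"
    and rl :: "('l \<Rightarrow> 'l) \<Rightarrow> 'l set \<Rightarrow> 'a \<Rightarrow> 'a"
    and e :: 'a
    and m :: "'l set \<Rightarrow> 'l set \<Rightarrow> 'a \<Rightarrow> 'a \<Rightarrow> 'a"
    and \<Delta> :: "'l set \<Rightarrow> 'l set \<Rightarrow> 'a \<Rightarrow> 'a \<times> 'a"
  assumes set_hopf_monoid: "set_hopf_monoid H rl e m \<Delta>"
begin

lemma species: "set_species H rl e"
  and monoid: "set_monoid_ax H rl e m"
  and comonoid: "set_comonoid_ax H rl e \<Delta>"
  and compatible: "hopf_compat H m \<Delta>"
  using set_hopf_monoid unfolding set_hopf_monoid_def by auto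

lemma rl_closed: "finite I \<Longrightarrow> inj_on \<sigma> I \<Longrightarrow> x \<in> H I \<Longrightarrow> rl \<sigma> I x \<in> H (\<sigma> ` I)"
  using species by (simp add: set_species_def)

lemma rl_id: "finite I \<Longrightarrow> x \<in> H I \<Longrightarrow> rl id I x = x"
  using species by (simp add: set_species_def)

lemma rl_comp:
  "finite I \<Longrightarrow> inj_on \<sigma> I \<Longrightarrow> inj_on \<tau> (\<sigma> ` I) \<Longrightarrow> x \<in> H I
    \<Longrightarrow> rl (\<tau> \<circ> \<sigma>) I x = rl \<tau> (\<sigma> ` I) (rl \<sigma> I x)"
  using species by (simp add: set_species_def)

lemma rl_involution:
  assumes "\<sigma> \<circ> \<sigma> = id" and "\<sigma> ` S = T" and "finite S" and "w \<in> H S"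
  shows "rl \<sigma> T (rl \<sigma> S w) = w"
  using rl_comp[of S \<sigma> \<sigma> w] rl_id[of S w] involution_inj_on[OF assms(1)] assms by simp

lemma m_closed:
  "finite S \<Longrightarrow> finite T \<Longrightarrow> S \<inter> T = {} \<Longrightarrow> x \<in> H S \<Longrightarrow> y \<in> H T \<Longrightarrow> m S T x y \<in> H (S \<union> T)"
  using monoid by (simp add: set_monoid_ax_def)

lemma rl_m:
  "finite S \<Longrightarrow> finite T \<Longrightarrow> S \<inter> T = {} \<Longrightarrow> inj_on \<sigma> (S \<union> T) \<Longrightarrow> x \<in> H S \<Longrightarrow> y \<in> H T
    \<Longrightarrow> rl \<sigma> (S \<union> T) (m S T x y) = m (\<sigma> ` S) (\<sigma> ` T) (rl \<sigma> S x) (rl \<sigma> T y)"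
  using monoid by (simp add: set_monoid_ax_def)

lemma m_assoc:
  "finite R \<Longrightarrow> finite S \<Longrightarrow> finite T \<Longrightarrow> R \<inter> S = {} \<Longrightarrow> R \<inter> T = {} \<Longrightarrow> S \<inter> T = {}
    \<Longrightarrow> x \<in> H R \<Longrightarrow> y \<in> H S \<Longrightarrow> z \<in> H T
    \<Longrightarrow> m (R \<union> S) T (m R S x y) z = m R (S \<union> T) x (m S T y z)"
  using monoid by (simp add: set_monoid_ax_def)

lemma m_unit_left: "finite I \<Longrightarrow> x \<in> H I \<Longrightarrow> m {} I e x = x"
  and m_unit_right: "finite I \<Longrightarrow> x \<in> H I \<Longrightarrow> m I {} x e = x"
  using monoid by (simp_all add: set_monoid_ax_def)

lemma delta_closed:
  assumes "finite S" and "finite T" and "S \<inter> T = {}" and "x \<in> H (S \<union> T)"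
  shows "fst (\<Delta> S T x) \<in> H S" and "snd (\<Delta> S T x) \<in> H T"
  using comonoid assms by (simp_all add: set_comonoid_ax_def mem_Times_iff)

lemma rl_delta:
  "finite S \<Longrightarrow> finite T \<Longrightarrow> S \<inter> T = {} \<Longrightarrow> inj_on \<sigma> (S \<union> T) \<Longrightarrow> x \<in> H (S \<union> T)
    \<Longrightarrow> \<Delta> (\<sigma> ` S) (\<sigma> ` T) (rl \<sigma> (S \<union> T) x) = map_prod (rl \<sigma> S) (rl \<sigma> T) (\<Delta> S T x)"
  using comonoid by (simp add: set_comonoid_ax_def)

lemma delta_coassoc_fst:
  "finite R \<Longrightarrow> finite S \<Longrightarrow> finite T \<Longrightarrow> R \<inter> S = {} \<Longrightarrow> R \<inter> T = {} \<Longrightarrow> S \<inter> T = {}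
    \<Longrightarrow> x \<in> H (R \<union> S \<union> T)
    \<Longrightarrow> fst (\<Delta> R S (fst (\<Delta> (R \<union> S) T x))) = fst (\<Delta> R (S \<union> T) x)"
  using comonoid by (simp add: set_comonoid_ax_def)

lemma delta_counit_left: "finite I \<Longrightarrow> x \<in> H I \<Longrightarrow> \<Delta> {} I x = (e, x)"
  and delta_counit_right: "finite I \<Longrightarrow> x \<in> H I \<Longrightarrow> \<Delta> I {} x = (x, e)"
  using comonoid by (simp_all add: set_comonoid_ax_def)

lemma delta_m_compat:
  assumes "finite S1" and "finite S2" and "S1 \<inter> S2 = {}" and "T1 \<inter> T2 = {}" and "S1 \<union> S2 = T1 \<union> T2"
    and "x \<in> H S1" and "y \<in> H S2"
    and "A = S1 \<inter> T1" and "B = S1 \<inter> T2" and "C = S2 \<inter> T1" and "D = S2 \<inter> T2"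
  shows "\<Delta> T1 T2 (m S1 S2 x y) =
    (m A C (fst (\<Delta> A B x)) (fst (\<Delta> C D y)), m B D (snd (\<Delta> A B x)) (snd (\<Delta> C D y)))"
  using compatible assms by (simp add: hopf_compat_def)

lemma delta_m:
  assumes "finite S" and "finite T" and "S \<inter> T = {}" and "y \<in> H S" and "z \<in> H T"
  shows "\<Delta> S T (m S T y z) = (y, z)"
proof -
  have "\<Delta> S T (m S T y z) =
    (m S {} (fst (\<Delta> S {} y)) (fst (\<Delta> {} T z)), m {} T (snd (\<Delta> S {} y)) (snd (\<Delta> {} T z)))"
    by (rule delta_m_compat) (use assms in auto)
  then show ?thesis
    using assms by (simp add: delta_counit_left delta_counit_right m_unit_left m_unit_right)
qed

lemma delta_m_swap:
  assumes "finite S" and "finite T" and "S \<inter> T = {}" and "y \<in> H S" and "z \<in> H T"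
  shows "\<Delta> S T (m T S z y) = (y, z)"
proof -
  have "\<Delta> S T (m T S z y) =
    (m {} S (fst (\<Delta> {} T z)) (fst (\<Delta> S {} y)), m T {} (snd (\<Delta> {} T z)) (snd (\<Delta> S {} y)))"
    by (rule delta_m_compat) (use assms in auto)
  then show ?thesis
    using assms by (simp add: delta_counit_left delta_counit_right m_unit_left m_unit_right)
qed

lemma delta_m_interchange:
  assumes "finite P" and "finite Q" and "finite R" and "finite U"
    and "P \<inter> Q = {}" and "P \<inter> R = {}" and "P \<inter> U = {}" and "Q \<inter> R = {}" and "Q \<inter> U = {}" and "R \<inter> U = {}"
    and "a \<in> H P" and "b \<in> H Q" and "c \<in> H R" and "d \<in> H U"
  shows "\<Delta> (P \<union> R) (Q \<union> U) (m (P \<union> Q) (R \<union> U) (m P Q a b) (m R U c d)) = (m P R a c, m Q U b d)"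
proof -
  have "\<Delta> (P \<union> R) (Q \<union> U) (m (P \<union> Q) (R \<union> U) (m P Q a b) (m R U c d)) =
    (m P R (fst (\<Delta> P Q (m P Q a b))) (fst (\<Delta> R U (m R U c d))),
     m Q U (snd (\<Delta> P Q (m P Q a b))) (snd (\<Delta> R U (m R U c d))))"
    by (rule delta_m_compat) (use assms in \<open>auto intro: m_closed\<close>)
  then show ?thesis
    using delta_m assms by simp
qed

lemma m_eq_iff:
  assumes "finite S" and "finite T" and "S \<inter> T = {}"
    and "y \<in> H S" and "z \<in> H T" and "y' \<in> H S" and "z' \<in> H T"
  shows "m S T y z = m S T y' z' \<longleftrightarrow> y = y' \<and> z = z'"
proof
  assume "m S T y z = m S T y' z'"
  then have "\<Delta> S T (m S T y z) = \<Delta> S T (m S T y' z')"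
    by simp
  then show "y = y' \<and> z = z'"
    using delta_m[OF assms(1-5)] delta_m[OF assms(1-3,6,7)] by simp
qed simp

end

locale set_hopf_galois = set_hopf +
  fixes le :: "'l set \<Rightarrow> 'a \<Rightarrow> 'a \<Rightarrow> bool"
  assumes le_poset: "finite I \<Longrightarrow> poset_on (H I) (le I)"
    and rl_mono: "finite I \<Longrightarrow> inj_on \<sigma> I \<Longrightarrow> x \<in> H I \<Longrightarrow> x' \<in> H I \<Longrightarrow> le I x x'
      \<Longrightarrow> le (\<sigma> ` I) (rl \<sigma> I x) (rl \<sigma> I x')"
    and delta_mono: "finite S \<Longrightarrow> finite T \<Longrightarrow> S \<inter> T = {}
      \<Longrightarrow> x \<in> H (S \<union> T) \<Longrightarrow> x' \<in> H (S \<union> T) \<Longrightarrow> le (S \<union> T) x x'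
      \<Longrightarrow> prod_le le S T (\<Delta> S T x) (\<Delta> S T x')"
    and galois: "finite S \<Longrightarrow> finite T \<Longrightarrow> S \<inter> T = {} \<Longrightarrow>
      (\<forall>x\<in>H (S \<union> T). \<forall>y\<in>H S. \<forall>z\<in>H T.
          prod_le le S T (\<Delta> S T x) (y, z) \<longleftrightarrow> le (S \<union> T) x (m S T y z))
    \<or> (\<forall>x\<in>H (S \<union> T). \<forall>y\<in>H S. \<forall>z\<in>H T.
          le (S \<union> T) (m S T y z) x \<longleftrightarrow> prod_le le S T (y, z) (\<Delta> S T x))"
begin

lemma le_refl: "finite I \<Longrightarrow> x \<in> H I \<Longrightarrow> le I x x"
  using le_poset unfolding poset_on_def by blast

lemma le_antisym: "finite I \<Longrightarrow> x \<in> H I \<Longrightarrow> y \<in> H I \<Longrightarrow> le I x y \<Longrightarrow> le I y x \<Longrightarrow> x = y"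
  using le_poset unfolding poset_on_def by blast

lemma prod_le_antisym:
  assumes "finite S" and "finite T" and "p \<in> H S \<times> H T" and "q \<in> H S \<times> H T"
    and "prod_le le S T p q" and "prod_le le S T q p"
  shows "p = q"
  using assms le_antisym unfolding prod_le_def by (metis mem_Times_iff prod_eq_iff)

lemma le_rl_involution_iff:
  assumes "\<sigma> \<circ> \<sigma> = id" and "\<sigma> ` S = T" and "finite S" and "a \<in> H S" and "b \<in> H S"
  shows "le T (rl \<sigma> S a) (rl \<sigma> S b) \<longleftrightarrow> le S a b"
proof
  have inj: "inj_on \<sigma> X" for X
    using assms(1) by (rule involution_inj_on)
  have T: "finite T" "\<sigma> ` T = S"
    using assms(2,3) involution_image_swap[OF assms(1,2)] by auto
  assume "le T (rl \<sigma> S a) (rl \<sigma> S b)"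
  then have "le (\<sigma> ` T) (rl \<sigma> T (rl \<sigma> S a)) (rl \<sigma> T (rl \<sigma> S b))"
    using rl_mono[OF T(1) inj] rl_closed[OF assms(3) inj] assms by simp
  then show "le S a b"
    using rl_involution assms T by simp
next
  assume "le S a b"
  then show "le T (rl \<sigma> S a) (rl \<sigma> S b)"
    using rl_mono[OF assms(3) involution_inj_on[OF assms(1)]] assms by simp
qed

lemma m_swap_le_dichotomy:
  assumes "finite S" and "finite T" and "S \<inter> T = {}"
  shows "(\<forall>y\<in>H S. \<forall>z\<in>H T. le (S \<union> T) (m T S z y) (m S T y z))
    \<or> (\<forall>y\<in>H S. \<forall>z\<in>H T. le (S \<union> T) (m S T y z) (m T S z y))"
proof -
  have "m T S z y \<in> H (S \<union> T)" and "\<Delta> S T (m T S z y) = (y, z)" and "prod_le le S T (y, z) (y, z)"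
    if "y \<in> H S" and "z \<in> H T" for y z
    using that assms m_closed[of T S z y] delta_m_swap
    by (auto simp: prod_le_def le_refl Un_commute Int_commute)
  with galois[OF assms] show ?thesis
    by metis
qed

lemma delta_swap_le_dichotomy:
  assumes "finite S" and "finite T" and "S \<inter> T = {}"
  shows "(\<forall>x\<in>H (S \<union> T). prod_le le T S (\<Delta> T S x) (prod.swap (\<Delta> S T x)))
    \<or> (\<forall>x\<in>H (S \<union> T). prod_le le T S (prod.swap (\<Delta> S T x)) (\<Delta> T S x))"
proof -
  let ?y = "\<lambda>x. fst (\<Delta> S T x)" and ?z = "\<lambda>x. snd (\<Delta> S T x)"
  let ?p = "\<lambda>x. m S T (?y x) (?z x)"
  have yz: "?y x \<in> H S" "?z x \<in> H T" if "x \<in> H (S \<union> T)" for x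
    using delta_closed[OF assms that] .
  have p: "?p x \<in> H (S \<union> T)" if "x \<in> H (S \<union> T)" for x
    using m_closed[OF assms yz[OF that]] .
  have swap: "\<Delta> T S (?p x) = prod.swap (\<Delta> S T x)" if "x \<in> H (S \<union> T)" for x
    using delta_m_swap[of T S "?z x" "?y x"] assms yz[OF that] by (simp add: Int_commute prod.swap_def)
  have refl: "prod_le le S T (\<Delta> S T x) (?y x, ?z x)" if "x \<in> H (S \<union> T)" for x
    using yz[OF that] assms by (simp add: prod_le_def le_refl)
  have mono: "prod_le le T S (\<Delta> T S x) (\<Delta> T S x')"
    if "x \<in> H (S \<union> T)" and "x' \<in> H (S \<union> T)" and "le (S \<union> T) x x'" for x x'
    using delta_mono[of T S x x'] that assms by (simp add: Un_commute Int_commute)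
  from galois[OF assms] show ?thesis
  proof
    assume "\<forall>x\<in>H (S \<union> T). \<forall>y\<in>H S. \<forall>z\<in>H T.
      prod_le le S T (\<Delta> S T x) (y, z) \<longleftrightarrow> le (S \<union> T) x (m S T y z)"
    then have "le (S \<union> T) x (?p x)" if "x \<in> H (S \<union> T)" for x
      using that yz[OF that] refl[OF that] by blast
    then show ?thesis
      using mono p swap by fastforce
  next
    assume "\<forall>x\<in>H (S \<union> T). \<forall>y\<in>H S. \<forall>z\<in>H T.
      le (S \<union> T) (m S T y z) x \<longleftrightarrow> prod_le le S T (y, z) (\<Delta> S T x)"
    then have "le (S \<union> T) (?p x) x" if "x \<in> H (S \<union> T)" for x
      using that yz[OF that] assms by (simp add: prod_le_def le_refl)
    then show ?thesis
      using mono p swap by fastforce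
  qed
qed

lemma m_commute_of_swap_le:
  assumes "finite S" and "finite T" and "S \<inter> T = {}" and "card S = card T"
    and swap_le: "\<forall>y\<in>H S. \<forall>z\<in>H T. le (S \<union> T) (m T S z y) (m S T y z)"
    and "y \<in> H S" and "z \<in> H T"
  shows "m S T y z = m T S z y"
proof -
  obtain \<sigma> where inv: "\<sigma> \<circ> \<sigma> = id" and S: "\<sigma> ` S = T"
    using obtain_swapping_involution assms(1-4) by blast
  have T: "\<sigma> ` T = S"
    using inv S by (rule involution_image_swap)
  have inj: "inj_on \<sigma> X" for X
    using inv by (rule involution_inj_on)
  have fin: "finite (S \<union> T)" and ST: "\<sigma> ` (S \<union> T) = S \<union> T"
    using assms(1,2) S T by (auto simp: image_Un)
  have mem: "m S T u v \<in> H (S \<union> T)" "m T S v u \<in> H (S \<union> T)" if "u \<in> H S" "v \<in> H T" for u v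
    using m_closed[of S T u v] m_closed[of T S v u] that assms(1-3) by (auto simp: Un_commute Int_commute)
  define u where "u = rl \<sigma> T z"
  define v where "v = rl \<sigma> S y"
  have u: "u \<in> H S" and v: "v \<in> H T"
    using rl_closed[OF assms(2) inj assms(7)] rl_closed[OF assms(1) inj assms(6)] S T
    by (simp_all add: u_def v_def)
  have "rl \<sigma> (S \<union> T) (m S T u v) = m T S z y"
    using rl_m[OF assms(1-3) inj u v] rl_involution[OF inv T assms(2,7)] rl_involution[OF inv S assms(1,6)]
      S T by (simp add: u_def v_def)
  moreover have "rl \<sigma> (S \<union> T) (m T S v u) = m S T y z"
    using rl_m[of T S \<sigma> v u] inj rl_involution[OF inv T assms(2,7)] rl_involution[OF inv S assms(1,6)]
      assms S T v u by (simp add: u_def v_def Un_commute Int_commute)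
  moreover have "le (S \<union> T) (rl \<sigma> (S \<union> T) (m T S v u)) (rl \<sigma> (S \<union> T) (m S T u v))"
    using rl_mono[OF fin inj mem(2,1)[OF u v]] swap_le u v ST by simp
  ultimately have "le (S \<union> T) (m S T y z) (m T S z y)"
    by simp
  moreover have "le (S \<union> T) (m T S z y) (m S T y z)"
    using swap_le assms(6,7) by blast
  ultimately show ?thesis
    using le_antisym[OF fin mem[OF assms(6,7)]] by blast
qed

lemma m_commute_same_card:
  assumes "finite S" and "finite T" and "S \<inter> T = {}" and "card S = card T"
    and "y \<in> H S" and "z \<in> H T"
  shows "m S T y z = m T S z y"
  using m_swap_le_dichotomy[OF assms(1-3)]
proof
  assume "\<forall>y\<in>H S. \<forall>z\<in>H T. le (S \<union> T) (m T S z y) (m S T y z)"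
  then show ?thesis
    using m_commute_of_swap_le assms by blast
next
  assume "\<forall>y\<in>H S. \<forall>z\<in>H T. le (S \<union> T) (m S T y z) (m T S z y)"
  then have "m T S z y = m S T y z"
    using m_commute_of_swap_le[of T S z y] assms by (simp add: Un_commute Int_commute)
  then show ?thesis
    by simp
qed

lemma delta_swap_le_rl_involution_iff:
  assumes "finite S" and "finite T" and "S \<inter> T = {}" and "\<sigma> \<circ> \<sigma> = id" and "\<sigma> ` S = T"
    and "w \<in> H (S \<union> T)"
  shows "prod_le le T S (\<Delta> T S (rl \<sigma> (S \<union> T) w)) (prod.swap (\<Delta> S T (rl \<sigma> (S \<union> T) w)))
    \<longleftrightarrow> prod_le le T S (prod.swap (\<Delta> S T w)) (\<Delta> T S w)"
proof -
  have T: "\<sigma> ` T = S"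
    using assms(4,5) by (rule involution_image_swap)
  have inj: "inj_on \<sigma> X" for X
    using assms(4) by (rule involution_inj_on)
  have TS: "T \<union> S = S \<union> T" and dj: "T \<inter> S = {}"
    using assms(3) by auto
  have "fst (\<Delta> S T w) \<in> H S" "snd (\<Delta> S T w) \<in> H T" "fst (\<Delta> T S w) \<in> H T" "snd (\<Delta> T S w) \<in> H S"
    using delta_closed[OF assms(1-3,6)] delta_closed[OF assms(2,1) dj] assms(6) TS by auto
  moreover have "\<Delta> T S (rl \<sigma> (S \<union> T) w) = map_prod (rl \<sigma> S) (rl \<sigma> T) (\<Delta> S T w)"
    using rl_delta[OF assms(1-3) inj assms(6)] assms(5) T by simp
  moreover have "\<Delta> S T (rl \<sigma> (S \<union> T) w) = map_prod (rl \<sigma> T) (rl \<sigma> S) (\<Delta> T S w)"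
    using rl_delta[OF assms(2,1) dj inj, of w] assms(5,6) T TS by simp
  ultimately show ?thesis
    unfolding prod_le_def
    using le_rl_involution_iff[OF assms(4,5,1)] le_rl_involution_iff[OF assms(4) T assms(2)] by auto
qed

lemma delta_commute_same_card:
  assumes "finite S" and "finite T" and "S \<inter> T = {}" and "card S = card T" and "x \<in> H (S \<union> T)"
  shows "\<Delta> T S x = prod.swap (\<Delta> S T x)"
proof -
  obtain \<sigma> where inv: "\<sigma> \<circ> \<sigma> = id" and S: "\<sigma> ` S = T"
    using obtain_swapping_involution assms(1-4) by blast
  have fin: "finite (S \<union> T)" and ST: "\<sigma> ` (S \<union> T) = S \<union> T"
    using assms(1,2) S involution_image_swap[OF inv S] by (auto simp: image_Un)
  define below where "below w \<longleftrightarrow> prod_le le T S (\<Delta> T S w) (prod.swap (\<Delta> S T w))" for w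
  define above where "above w \<longleftrightarrow> prod_le le T S (prod.swap (\<Delta> S T w)) (\<Delta> T S w)" for w
  have rl_mem: "rl \<sigma> (S \<union> T) w \<in> H (S \<union> T)" if "w \<in> H (S \<union> T)" for w
    using rl_closed[OF fin involution_inj_on[OF inv] that] ST by simp
  have flip: "below (rl \<sigma> (S \<union> T) w) \<longleftrightarrow> above w" if "w \<in> H (S \<union> T)" for w
    unfolding below_def above_def by (rule delta_swap_le_rl_involution_iff[OF assms(1-3) inv S that])
  have flip': "above (rl \<sigma> (S \<union> T) w) \<longleftrightarrow> below w" if "w \<in> H (S \<union> T)" for w
    using flip[OF rl_mem[OF that]] rl_involution[OF inv ST fin that] by simp
  have "(\<forall>w\<in>H (S \<union> T). below w) \<or> (\<forall>w\<in>H (S \<union> T). above w)"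
    using delta_swap_le_dichotomy[OF assms(1-3)] unfolding below_def above_def .
  then have "below x" and "above x"
    using flip flip' rl_mem assms(5) by blast+
  then show ?thesis
    using prod_le_antisym[OF assms(2,1)] delta_closed[OF assms(1,2,3,5)]
      delta_closed[of T S x] assms unfolding below_def above_def
    by (simp add: mem_Times_iff Int_commute Un_commute)
qed

lemma m_commute:
  assumes "infinite (UNIV :: 'l set)" and "finite S" and "finite T" and "S \<inter> T = {}"
    and "y \<in> H S" and "z \<in> H T"
  shows "m S T y z = m T S z y"
proof -
  obtain \<tau> \<rho> T' S' where \<tau>: "inj_on \<tau> T" "\<tau> ` T = T'" and \<rho>: "inj_on \<rho> S" "\<rho> ` S = S'"
    and dj: "T' \<inter> (S \<union> T) = {}" "S' \<inter> (S \<union> T \<union> T') = {}"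
    using obtain_fresh_copies[OF assms(1-3)] .
  have fin: "finite T'" "finite S'" and card: "card T' = card T" "card S' = card S"
    using assms(2,3) \<tau> \<rho> by (auto simp: card_image)
  have djs: "S \<inter> T' = {}" "T \<inter> S' = {}" "S \<inter> S' = {}" "T' \<inter> T = {}" "T' \<inter> S' = {}"
    "T \<inter> S = {}" "T \<inter> T' = {}" "S' \<inter> S = {}" "S' \<inter> T' = {}" "(S \<union> T') \<inter> (T \<union> S') = {}"
    using dj assms(4) by auto
  have z': "rl \<tau> T z \<in> H T'" and y': "rl \<rho> S y \<in> H S'"
    using rl_closed[OF assms(3) \<tau>(1) assms(6)] rl_closed[OF assms(2) \<rho>(1) assms(5)] \<tau>(2) \<rho>(2) by simp_all
  define a where "a = m S T' y (rl \<tau> T z)"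
  define b where "b = m T S' z (rl \<rho> S y)"
  have a: "a \<in> H (S \<union> T')" and b: "b \<in> H (T \<union> S')"
    unfolding a_def b_def using m_closed[OF assms(2) fin(1) djs(1) assms(5) z'] m_closed[OF assms(3) fin(2) djs(2) assms(6) y'] .
  have "card (S \<union> T') = card (T \<union> S')"
    using assms(2,3) fin djs card by (simp add: card_Un_disjoint)
  then have "m (S \<union> T') (T \<union> S') a b = m (T \<union> S') (S \<union> T') b a"
    using m_commute_same_card[OF _ _ djs(10) _ a b] assms(2,3) fin by simp
  moreover have "fst (\<Delta> (S \<union> T) (T' \<union> S') (m (S \<union> T') (T \<union> S') a b)) = m S T y z"
    using delta_m_interchange[OF assms(2) fin(1) assms(3) fin(2) djs(1) assms(4) djs(3,4,5,2) assms(5) z' assms(6) y']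
    unfolding a_def b_def by simp
  moreover have "fst (\<Delta> (S \<union> T) (T' \<union> S') (m (T \<union> S') (S \<union> T') b a)) = m T S z y"
    using delta_m_interchange[OF assms(3) fin(2) assms(2) fin(1) djs(2,6,7,8,9,1) assms(6) y' assms(5) z']
    unfolding a_def b_def by (simp add: Un_commute)
  ultimately show ?thesis
    by simp
qed

lemma delta_commute:
  assumes "infinite (UNIV :: 'l set)" and "finite S" and "finite T" and "S \<inter> T = {}"
    and "x \<in> H (S \<union> T)"
  shows "\<Delta> T S x = prod.swap (\<Delta> S T x)"
proof -
  obtain \<tau> \<rho> T' S' where \<tau>: "inj_on \<tau> T" "\<tau> ` T = T'" and \<rho>: "inj_on \<rho> S" "\<rho> ` S = S'"
    and dj: "T' \<inter> (S \<union> T) = {}" "S' \<inter> (S \<union> T \<union> T') = {}"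
    using obtain_fresh_copies[OF assms(1-3)] .
  have fin: "finite T'" "finite S'" and card: "card T' = card T" "card S' = card S"
    using assms(2,3) \<tau> \<rho> by (auto simp: card_image)
  have djs: "S \<inter> T' = {}" "T \<inter> S' = {}" "T \<inter> S = {}" "T' \<inter> S' = {}" "S' \<inter> T' = {}"
    "(S \<union> T) \<inter> (T' \<union> S') = {}" "(S \<union> T') \<inter> (T \<union> S') = {}"
    using dj assms(4) by auto
  have x: "fst (\<Delta> S T x) \<in> H S" "snd (\<Delta> S T x) \<in> H T" "fst (\<Delta> T S x) \<in> H T" "snd (\<Delta> T S x) \<in> H S"
    using delta_closed[OF assms(2-5)] delta_closed[OF assms(3,2) djs(3)] assms(5) by (simp_all add: Un_commute)
  have "m T' S' (rl \<tau> T (snd (\<Delta> S T x))) (rl \<rho> S (fst (\<Delta> S T x))) \<in> H (T' \<union> S')"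
    using m_closed[OF fin djs(4)] rl_closed[OF assms(3) \<tau>(1) x(2)] rl_closed[OF assms(2) \<rho>(1) x(1)]
      \<tau>(2) \<rho>(2) by simp
  then obtain w where w: "w \<in> H (T' \<union> S')" ..
  have w': "fst (\<Delta> T' S' w) \<in> H T'" "snd (\<Delta> T' S' w) \<in> H S'"
    "fst (\<Delta> S' T' w) \<in> H S'" "snd (\<Delta> S' T' w) \<in> H T'"
    using delta_closed[OF fin djs(4) w] delta_closed[OF fin(2,1) djs(5)] w by (simp_all add: Un_commute)
  define X where "X = m (S \<union> T) (T' \<union> S') x w"
  have "X \<in> H ((S \<union> T') \<union> (T \<union> S'))"
    using m_closed[OF _ _ djs(6) assms(5) w] assms(2,3) fin unfolding X_def by (simp add: Un_ac)
  moreover have "card (S \<union> T') = card (T \<union> S')"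
    using assms(2,3) fin djs card by (simp add: card_Un_disjoint)
  ultimately have "\<Delta> (T \<union> S') (S \<union> T') X = prod.swap (\<Delta> (S \<union> T') (T \<union> S') X)"
    using delta_commute_same_card[OF _ _ djs(7)] assms(2,3) fin by simp
  moreover have "\<Delta> (S \<union> T') (T \<union> S') X =
    (m S T' (fst (\<Delta> S T x)) (fst (\<Delta> T' S' w)), m T S' (snd (\<Delta> S T x)) (snd (\<Delta> T' S' w)))"
    unfolding X_def by (rule delta_m_compat) (use assms fin dj w in auto)
  moreover have "\<Delta> (T \<union> S') (S \<union> T') X =
    (m T S' (fst (\<Delta> T S x)) (fst (\<Delta> S' T' w)), m S T' (snd (\<Delta> T S x)) (snd (\<Delta> S' T' w)))"
    unfolding X_def by (rule delta_m_compat) (use assms fin dj w in auto)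
  ultimately have "m T S' (fst (\<Delta> T S x)) (fst (\<Delta> S' T' w)) = m T S' (snd (\<Delta> S T x)) (snd (\<Delta> T' S' w))"
    and "m S T' (snd (\<Delta> T S x)) (snd (\<Delta> S' T' w)) = m S T' (fst (\<Delta> S T x)) (fst (\<Delta> T' S' w))"
    by simp_all
  then have "fst (\<Delta> T S x) = snd (\<Delta> S T x)" and "snd (\<Delta> T S x) = fst (\<Delta> S T x)"
    using m_eq_iff[OF assms(3) fin(2) djs(2) x(3) w'(3) x(2) w'(2)]
      m_eq_iff[OF assms(2) fin(1) djs(1) x(4) w'(4) x(1) w'(1)] by simp_all
  then show ?thesis
    by (simp add: prod_eq_iff)
qed

lemma hopf_commutative:
  assumes "infinite (UNIV :: 'l set)"
  shows "hopf_commutative H m"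
  unfolding hopf_commutative_def using m_commute[OF assms] by blast

lemma hopf_cocommutative:
  assumes "infinite (UNIV :: 'l set)"
  shows "hopf_cocommutative H \<Delta>"
  unfolding hopf_cocommutative_def
proof (intro allI impI)
  fix S T x y z
  assume "finite S \<and> finite T \<and> S \<inter> T = {} \<and> x \<in> H (S \<union> T)"
  then have "\<Delta> T S x = prod.swap (\<Delta> S T x)"
    using delta_commute[OF assms] by blast
  then show "\<Delta> S T x = (y, z) \<longleftrightarrow> \<Delta> T S x = (z, y)"
    by (cases "\<Delta> S T x") auto
qed

end

lemma (in set_hopf) obtain_galois_order:
  assumes "self_adjoint H rl m \<Delta>"
  obtains le where "set_hopf_galois H rl e m \<Delta> le"
  using assms unfolding self_adjoint_def
  apply (elim exE conjE)
  subgoal for le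
    by (rule that[of le], intro set_hopf_galois.intro set_hopf_axioms set_hopf_galois_axioms.intro) simp_all
  done

locale set_hopf_bicomm = set_hopf H rl e m \<Delta>
  for H :: "'l set \<Rightarrow> 'a set"
    and rl :: "('l \<Rightarrow> 'l) \<Rightarrow> 'l set \<Rightarrow> 'a \<Rightarrow> 'a"
    and e :: 'a
    and m :: "'l set \<Rightarrow> 'l set \<Rightarrow> 'a \<Rightarrow> 'a \<Rightarrow> 'a"
    and \<Delta> :: "'l set \<Rightarrow> 'l set \<Rightarrow> 'a \<Rightarrow> 'a \<times> 'a" +
  assumes commutative: "hopf_commutative H m"
    and cocommutative: "hopf_cocommutative H \<Delta>"
begin

lemma m_comm: "finite S \<Longrightarrow> finite T \<Longrightarrow> S \<inter> T = {} \<Longrightarrow> x \<in> H S \<Longrightarrow> y \<in> H T \<Longrightarrow> m S T x y = m T S y x"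
  using commutative unfolding hopf_commutative_def by blast

lemma delta_comm:
  assumes "finite S" and "finite T" and "S \<inter> T = {}" and "x \<in> H (S \<union> T)"
  shows "\<Delta> T S x = prod.swap (\<Delta> S T x)"
  using cocommutative[unfolded hopf_cocommutative_def, rule_format, of S T x "fst (\<Delta> S T x)" "snd (\<Delta> S T x)"]
    assms by (simp add: prod.swap_def)

definition restr :: "'l set \<Rightarrow> 'l set \<Rightarrow> 'a \<Rightarrow> 'a" where
  "restr I U x = fst (\<Delta> U (I - U) x)"

definition proj :: "'l set \<Rightarrow> 'l set \<Rightarrow> 'a \<Rightarrow> 'a" where
  "proj A B x = m A B (fst (\<Delta> A B x)) (snd (\<Delta> A B x))"

lemma restr_closed:
  assumes "finite I" and "U \<subseteq> I" and "u \<in> H I"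
  shows "restr I U u \<in> H U"
proof -
  have "U \<union> (I - U) = I"
    using assms(2) by auto
  then show ?thesis
    unfolding restr_def using delta_closed(1)[of U "I - U" u] assms finite_subset by auto
qed

lemma delta_eq_restr:
  assumes "finite I" and "S \<inter> T = {}" and "S \<union> T = I" and "u \<in> H I"
  shows "\<Delta> S T u = (restr I S u, restr I T u)"
proof -
  have "I - S = T" and "I - T = S"
    using assms(2,3) by auto
  moreover have "\<Delta> T S u = prod.swap (\<Delta> S T u)"
    using delta_comm[of S T u] assms by auto
  ultimately show ?thesis
    unfolding restr_def by (simp add: prod_eq_iff)
qed

lemma restr_restr:
  assumes "finite I" and "U \<subseteq> V" and "V \<subseteq> I" and "u \<in> H I"
  shows "restr V U (restr I V u) = restr I U u"
proof -
  have eqs: "U \<union> (V - U) = V" "(V - U) \<union> (I - V) = I - U" "U \<union> (V - U) \<union> (I - V) = I"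
    using assms(2,3) by auto
  have "fst (\<Delta> U (V - U) (fst (\<Delta> (U \<union> (V - U)) (I - V) u))) = fst (\<Delta> U ((V - U) \<union> (I - V)) u)"
    by (rule delta_coassoc_fst) (use assms eqs in \<open>auto intro: finite_subset\<close>)
  then show ?thesis
    unfolding restr_def eqs(1,2) .
qed

lemma delta_restr:
  assumes "finite I" and "u \<in> H I" and "V \<subseteq> I" and "P \<inter> Q = {}" and "P \<union> Q = V"
  shows "\<Delta> P Q (restr I V u) = (restr I P u, restr I Q u)"
proof -
  have "finite V"
    using assms(1,3) by (rule finite_subset[rotated])
  then have "\<Delta> P Q (restr I V u) = (restr V P (restr I V u), restr V Q (restr I V u))"
    using delta_eq_restr[OF _ assms(4,5) restr_closed[OF assms(1,3,2)]] by simp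
  also have "\<dots> = (restr I P u, restr I Q u)"
    using restr_restr[OF assms(1) _ assms(3,2)] assms(5) by auto
  finally show ?thesis .
qed

lemma proj_eq_restr:
  "finite I \<Longrightarrow> A \<inter> B = {} \<Longrightarrow> A \<union> B = I \<Longrightarrow> u \<in> H I \<Longrightarrow> proj A B u = m A B (restr I A u) (restr I B u)"
  unfolding proj_def by (simp add: delta_eq_restr)

lemma proj_restr:
  "finite I \<Longrightarrow> u \<in> H I \<Longrightarrow> V \<subseteq> I \<Longrightarrow> A \<inter> B = {} \<Longrightarrow> A \<union> B = V
    \<Longrightarrow> proj A B (restr I V u) = m A B (restr I A u) (restr I B u)"
  unfolding proj_def by (simp add: delta_restr)

lemma proj_closed:
  assumes "finite I" and "A \<inter> B = {}" and "A \<union> B = I" and "u \<in> H I"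
  shows "proj A B u \<in> H I"
proof -
  have "finite A" "finite B" "A \<subseteq> I" "B \<subseteq> I"
    using assms(1,3) by auto
  then show ?thesis
    using proj_eq_restr[OF assms] m_closed[OF _ _ assms(2)] restr_closed assms by simp
qed

lemma proj_idem:
  assumes "finite I" and "A \<inter> B = {}" and "A \<union> B = I" and "u \<in> H I"
  shows "proj A B (proj A B u) = proj A B u"
proof -
  have "finite A" "finite B" "A \<subseteq> I" "B \<subseteq> I"
    using assms(1,3) by auto
  then have "restr I A u \<in> H A" "restr I B u \<in> H B"
    using restr_closed assms(1,4) by auto
  then show ?thesis
    unfolding proj_eq_restr[OF assms] using delta_m[OF \<open>finite A\<close> \<open>finite B\<close> assms(2)]
    by (simp add: proj_def)
qed

lemma delta_proj:
  assumes "finite I" and "u \<in> H I" and "A \<inter> B = {}" and "A \<union> B = I" and "S \<inter> T = {}" and "S \<union> T = I"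
  shows "\<Delta> S T (proj A B u) =
    (proj (A \<inter> S) (B \<inter> S) (fst (\<Delta> S T u)), proj (A \<inter> T) (B \<inter> T) (snd (\<Delta> S T u)))"
proof -
  have sub: "A \<subseteq> I" "B \<subseteq> I" "S \<subseteq> I" "T \<subseteq> I"
    using assms(4,6) by auto
  have fin: "finite A" "finite B"
    using assms(1) sub by (auto intro: finite_subset)
  have parts: "(A \<inter> S) \<inter> (A \<inter> T) = {}" "(A \<inter> S) \<union> (A \<inter> T) = A"
    "(B \<inter> S) \<inter> (B \<inter> T) = {}" "(B \<inter> S) \<union> (B \<inter> T) = B"
    "(A \<inter> S) \<inter> (B \<inter> S) = {}" "(A \<inter> S) \<union> (B \<inter> S) = S"
    "(A \<inter> T) \<inter> (B \<inter> T) = {}" "(A \<inter> T) \<union> (B \<inter> T) = T"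
    using assms(3-6) by auto
  have "\<Delta> S T (proj A B u) = \<Delta> S T (m A B (restr I A u) (restr I B u))"
    using proj_eq_restr[OF assms(1,3,4,2)] by simp
  also have "\<dots> =
    (m (A \<inter> S) (B \<inter> S) (fst (\<Delta> (A \<inter> S) (A \<inter> T) (restr I A u))) (fst (\<Delta> (B \<inter> S) (B \<inter> T) (restr I B u))),
     m (A \<inter> T) (B \<inter> T) (snd (\<Delta> (A \<inter> S) (A \<inter> T) (restr I A u))) (snd (\<Delta> (B \<inter> S) (B \<inter> T) (restr I B u))))"
    by (rule delta_m_compat) (use assms fin sub restr_closed in auto)
  also have "\<dots> =
    (m (A \<inter> S) (B \<inter> S) (restr I (A \<inter> S) u) (restr I (B \<inter> S) u),
     m (A \<inter> T) (B \<inter> T) (restr I (A \<inter> T) u) (restr I (B \<inter> T) u))"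
    using delta_restr[OF assms(1,2) sub(1) parts(1,2)] delta_restr[OF assms(1,2) sub(2) parts(3,4)] by simp
  also have "\<dots> = (proj (A \<inter> S) (B \<inter> S) (restr I S u), proj (A \<inter> T) (B \<inter> T) (restr I T u))"
    using proj_restr[OF assms(1,2) sub(3) parts(5,6)] proj_restr[OF assms(1,2) sub(4) parts(7,8)] by simp
  finally show ?thesis
    using delta_eq_restr[OF assms(1,5,6,2)] by simp
qed

lemma m_interchange:
  assumes "finite P" and "finite Q" and "finite R" and "finite U"
    and "P \<inter> Q = {}" and "P \<inter> R = {}" and "P \<inter> U = {}" and "Q \<inter> R = {}" and "Q \<inter> U = {}" and "R \<inter> U = {}"
    and "a \<in> H P" and "b \<in> H Q" and "c \<in> H R" and "d \<in> H U"
  shows "m (P \<union> Q) (R \<union> U) (m P Q a b) (m R U c d) = m (P \<union> R) (Q \<union> U) (m P R a c) (m Q U b d)"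
proof -
  have fin: "finite (R \<union> U)" "finite (Q \<union> U)"
    using assms(2-4) by auto
  have dj: "P \<inter> (R \<union> U) = {}" "Q \<inter> (R \<union> U) = {}" "P \<inter> (Q \<union> U) = {}" "R \<inter> (Q \<union> U) = {}"
    using assms(5-10) by auto
  have "m (P \<union> Q) (R \<union> U) (m P Q a b) (m R U c d) = m P (Q \<union> (R \<union> U)) a (m Q (R \<union> U) b (m R U c d))"
    by (rule m_assoc[OF assms(1,2) fin(1) assms(5) dj(1,2) assms(11,12) m_closed[OF assms(3,4,10,13,14)]])
  also have "m Q (R \<union> U) b (m R U c d) = m (Q \<union> R) U (m Q R b c) d"
    using m_assoc[OF assms(2-4,8,9,10,12-14)] by simp
  also have "m Q R b c = m R Q c b"
    using m_comm[OF assms(2,3,8,12,13)] .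
  also have "m (Q \<union> R) U (m R Q c b) d = m R (Q \<union> U) c (m Q U b d)"
    using m_assoc[OF assms(3,2,4) _ assms(10,9,13,12,14)] assms(8) by (simp add: Un_commute Int_commute)
  also have "Q \<union> (R \<union> U) = R \<union> (Q \<union> U)"
    by auto
  also have "m P (R \<union> (Q \<union> U)) a (m R (Q \<union> U) c (m Q U b d)) = m (P \<union> R) (Q \<union> U) (m P R a c) (m Q U b d)"
    by (rule m_assoc[OF assms(1,3) fin(2) assms(6) dj(3,4) assms(11,13) m_closed[OF assms(2,4,9,12,14)], symmetric])
  finally show ?thesis .
qed

lemma proj_proj:
  assumes "finite I" and "u \<in> H I" and "A \<inter> B = {}" and "A \<union> B = I" and "C \<inter> D = {}" and "C \<union> D = I"
  shows "proj A B (proj C D u) =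
    m A B (m (A \<inter> C) (A \<inter> D) (restr I (A \<inter> C) u) (restr I (A \<inter> D) u))
          (m (B \<inter> C) (B \<inter> D) (restr I (B \<inter> C) u) (restr I (B \<inter> D) u))"
proof -
  have sub: "A \<subseteq> I" "B \<subseteq> I"
    using assms(4) by auto
  have "\<Delta> A B (proj C D u) = (proj (C \<inter> A) (D \<inter> A) (restr I A u), proj (C \<inter> B) (D \<inter> B) (restr I B u))"
    using delta_proj[OF assms(1,2,5,6,3,4)] delta_eq_restr[OF assms(1,3,4,2)] by simp
  moreover have "proj (C \<inter> A) (D \<inter> A) (restr I A u) = m (A \<inter> C) (A \<inter> D) (restr I (A \<inter> C) u) (restr I (A \<inter> D) u)"
    using proj_restr[OF assms(1,2) sub(1), of "C \<inter> A" "D \<inter> A"] assms(5,6) sub(1) by (auto simp: Int_commute)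
  moreover have "proj (C \<inter> B) (D \<inter> B) (restr I B u) = m (B \<inter> C) (B \<inter> D) (restr I (B \<inter> C) u) (restr I (B \<inter> D) u)"
    using proj_restr[OF assms(1,2) sub(2), of "C \<inter> B" "D \<inter> B"] assms(5,6) sub(2) by (auto simp: Int_commute)
  ultimately show ?thesis
    by (simp add: proj_def[of A B "proj C D u"])
qed

lemma proj_commute:
  assumes "finite I" and "u \<in> H I" and "A \<inter> B = {}" and "A \<union> B = I" and "C \<inter> D = {}" and "C \<union> D = I"
  shows "proj A B (proj C D u) = proj C D (proj A B u)"
proof -
  have sub: "A \<inter> C \<subseteq> I" "A \<inter> D \<subseteq> I" "B \<inter> C \<subseteq> I" "B \<inter> D \<subseteq> I"
    using assms(4) by auto
  have fin: "finite (A \<inter> C)" "finite (A \<inter> D)" "finite (B \<inter> C)" "finite (B \<inter> D)"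
    using assms(1) sub by (auto intro: finite_subset)
  have "(A \<inter> C) \<union> (A \<inter> D) = A" "(B \<inter> C) \<union> (B \<inter> D) = B" "(A \<inter> C) \<union> (B \<inter> C) = C" "(A \<inter> D) \<union> (B \<inter> D) = D"
    using assms(3-6) by auto
  moreover have "m ((A \<inter> C) \<union> (A \<inter> D)) ((B \<inter> C) \<union> (B \<inter> D))
      (m (A \<inter> C) (A \<inter> D) (restr I (A \<inter> C) u) (restr I (A \<inter> D) u))
      (m (B \<inter> C) (B \<inter> D) (restr I (B \<inter> C) u) (restr I (B \<inter> D) u))
    = m ((A \<inter> C) \<union> (B \<inter> C)) ((A \<inter> D) \<union> (B \<inter> D))
      (m (A \<inter> C) (B \<inter> C) (restr I (A \<inter> C) u) (restr I (B \<inter> C) u))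
      (m (A \<inter> D) (B \<inter> D) (restr I (A \<inter> D) u) (restr I (B \<inter> D) u))"
    by (rule m_interchange) (use fin assms restr_closed[OF assms(1) sub(1) assms(2)] restr_closed[OF assms(1) sub(2) assms(2)]
      restr_closed[OF assms(1) sub(3) assms(2)] restr_closed[OF assms(1) sub(4) assms(2)] in auto)
  ultimately show ?thesis
    using proj_proj[OF assms] proj_proj[OF assms(1,2,5,6,3,4)] by (simp add: Int_commute)
qed

definition proj_step :: "'l set \<Rightarrow> 'a \<Rightarrow> 'a \<Rightarrow> bool" where
  "proj_step I u v \<longleftrightarrow> u \<in> H I \<and> (\<exists>A B. A \<inter> B = {} \<and> A \<union> B = I \<and> v = proj A B u)"

definition fixed_splits :: "'l set \<Rightarrow> 'a \<Rightarrow> ('l set \<times> 'l set) set" where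
  "fixed_splits I u = {(A, B). A \<inter> B = {} \<and> A \<union> B = I \<and> proj A B u = u}"

definition proj_le :: "'l set \<Rightarrow> 'a \<Rightarrow> 'a \<Rightarrow> bool" where
  "proj_le I x y \<longleftrightarrow> (proj_step I)\<^sup>*\<^sup>* y x"

lemma proj_step_closed:
  assumes "finite I" and "proj_step I u v"
  shows "v \<in> H I"
proof -
  obtain A B where "u \<in> H I" and "A \<inter> B = {}" and "A \<union> B = I" and "v = proj A B u"
    using assms(2) unfolding proj_step_def by blast
  then show ?thesis
    using proj_closed[OF assms(1)] by simp
qed

lemma fixed_splits_step:
  assumes "finite I" and "proj_step I u v"
  shows "fixed_splits I u \<subseteq> fixed_splits I v"
proof
  fix p
  assume "p \<in> fixed_splits I u"
  then obtain S T where p: "p = (S, T)" "S \<inter> T = {}" "S \<union> T = I" and fixed: "proj S T u = u"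
    unfolding fixed_splits_def by blast
  obtain A B where u: "u \<in> H I" and AB: "A \<inter> B = {}" "A \<union> B = I" and v: "v = proj A B u"
    using assms(2) unfolding proj_step_def by blast
  have "proj S T v = v"
    using proj_commute[OF assms(1) u p(2,3) AB] fixed v by simp
  then show "p \<in> fixed_splits I v"
    using p unfolding fixed_splits_def by simp
qed

lemma fixed_splits_mono:
  assumes "finite I" and "(proj_step I)\<^sup>*\<^sup>* u v"
  shows "fixed_splits I u \<subseteq> fixed_splits I v"
  using assms(2) by induction (use fixed_splits_step[OF assms(1)] in blast)+

text \<open>Each split used along a path fixes the element it produces, hence fixes the end point.\<close>

lemma proj_reach_eq:
  assumes "finite I" and "(proj_step I)\<^sup>*\<^sup>* u v" and "fixed_splits I v \<subseteq> fixed_splits I u"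
  shows "u = v"
  using assms(2,3)
proof (induction rule: rtranclp_induct)
  case base
  then show ?case
    by simp
next
  case (step y z)
  then have "u = y"
    using fixed_splits_step[OF assms(1) step.hyps(2)] by blast
  obtain A B where y: "y \<in> H I" and AB: "A \<inter> B = {}" "A \<union> B = I" and z: "z = proj A B y"
    using step.hyps(2) unfolding proj_step_def by blast
  have "(A, B) \<in> fixed_splits I z"
    using proj_idem[OF assms(1) AB y] AB z unfolding fixed_splits_def by simp
  then have "proj A B u = u"
    using step.prems unfolding fixed_splits_def by blast
  then show "u = z"
    using \<open>u = y\<close> z by simp
qed

lemma proj_le_poset: "finite I \<Longrightarrow> poset_on (H I) (proj_le I)"
  unfolding poset_on_def proj_le_def
  by (meson fixed_splits_mono proj_reach_eq rtranclp.rtrancl_refl rtranclp_trans)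

lemma rl_proj_step:
  assumes "finite I" and "inj_on \<sigma> I" and "proj_step I u v"
  shows "proj_step (\<sigma> ` I) (rl \<sigma> I u) (rl \<sigma> I v)"
proof -
  obtain A B where u: "u \<in> H I" and AB: "A \<inter> B = {}" "A \<union> B = I" and v: "v = proj A B u"
    using assms(3) unfolding proj_step_def by blast
  have fin: "finite A" "finite B" and inj: "inj_on \<sigma> (A \<union> B)" and uAB: "u \<in> H (A \<union> B)"
    using assms(1,2) AB u by auto
  have "rl \<sigma> I v = m (\<sigma> ` A) (\<sigma> ` B) (rl \<sigma> A (fst (\<Delta> A B u))) (rl \<sigma> B (snd (\<Delta> A B u)))"
    unfolding v proj_def using rl_m[OF fin AB(1) inj delta_closed[OF fin AB(1) uAB]] AB(2) by simp
  also have "\<dots> = proj (\<sigma> ` A) (\<sigma> ` B) (rl \<sigma> I u)"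
    unfolding proj_def using rl_delta[OF fin AB(1) inj uAB] AB(2) by simp
  finally have "rl \<sigma> I v = proj (\<sigma> ` A) (\<sigma> ` B) (rl \<sigma> I u)" .
  moreover have "\<sigma> ` A \<inter> \<sigma> ` B = {}"
    using inj_on_image_Int[OF inj, of A B] AB(1) by auto
  moreover have "\<sigma> ` A \<union> \<sigma> ` B = \<sigma> ` I"
    using AB(2) by auto
  moreover have "rl \<sigma> I u \<in> H (\<sigma> ` I)"
    using rl_closed[OF assms(1,2) u] .
  ultimately show ?thesis
    unfolding proj_step_def by blast
qed

lemma m_proj_step_left:
  assumes "finite S" and "finite T" and "S \<inter> T = {}" and "y \<in> H T" and "proj_step S x x'"
  shows "proj_step (S \<union> T) (m S T x y) (m S T x' y)"
proof -
  obtain A B where x: "x \<in> H S" and AB: "A \<inter> B = {}" "A \<union> B = S" and x': "x' = proj A B x"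
    using assms(5) unfolding proj_step_def by blast
  define a b where "a = fst (\<Delta> A B x)" and "b = snd (\<Delta> A B x)"
  have fin: "finite A" "finite B" and dj: "A \<inter> T = {}" "B \<inter> T = {}" "T \<inter> B = {}"
    using assms(1,3) AB by auto
  have ab: "a \<in> H A" "b \<in> H B"
    using delta_closed[OF fin AB(1)] x AB(2) by (simp_all add: a_def b_def)
  have "\<Delta> (A \<union> T) B (m S T x y) = (m A T a (fst (\<Delta> T {} y)), m B {} b (snd (\<Delta> T {} y)))"
    unfolding a_def b_def by (rule delta_m_compat) (use assms AB x in auto)
  then have "proj (A \<union> T) B (m S T x y) = m (A \<union> T) B (m A T a y) b"
    using delta_counit_right[OF assms(2,4)] m_unit_right[OF fin(2) ab(2)] by (simp add: proj_def)
  moreover have "m S T x' y = m (A \<union> T) B (m A T a y) b"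
  proof -
    have "m S T x' y = m (A \<union> B) T (m A B a b) y"
      using x' AB(2) by (simp add: proj_def a_def b_def)
    also have "\<dots> = m A (B \<union> T) a (m B T b y)"
      using m_assoc[OF fin assms(2) AB(1) dj(1,2) ab assms(4)] .
    also have "m B T b y = m T B y b"
      using m_comm[OF fin(2) assms(2) dj(2) ab(2) assms(4)] .
    also have "m A (B \<union> T) a (m T B y b) = m (A \<union> T) B (m A T a y) b"
      using m_assoc[OF fin(1) assms(2) fin(2) dj(1) AB(1) dj(3) ab(1) assms(4) ab(2)]
      by (simp add: Un_commute)
    finally show ?thesis .
  qed
  moreover have "m S T x y \<in> H (S \<union> T)"
    using m_closed[OF assms(1-3) x assms(4)] .
  moreover have "(A \<union> T) \<inter> B = {}" "(A \<union> T) \<union> B = S \<union> T"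
    using AB dj by auto
  ultimately show ?thesis
    unfolding proj_step_def by metis
qed

lemma m_proj_step_right:
  assumes "finite S" and "finite T" and "S \<inter> T = {}" and "x \<in> H S" and "proj_step T y y'"
  shows "proj_step (S \<union> T) (m S T x y) (m S T x y')"
proof -
  have "y \<in> H T" and "y' \<in> H T"
    using assms(5) proj_step_closed[OF assms(2,5)] unfolding proj_step_def by auto
  then have "m S T x y = m T S y x" and "m S T x y' = m T S y' x"
    using m_comm[OF assms(1-4)] by auto
  moreover have "proj_step (T \<union> S) (m T S y x) (m T S y' x)"
    using m_proj_step_left[OF assms(2,1) _ assms(4,5)] assms(3) by (simp add: Int_commute)
  ultimately show ?thesis
    by (simp add: Un_commute)
qed

lemma delta_proj_step:
  assumes "finite S" and "finite T" and "S \<inter> T = {}" and "proj_step (S \<union> T) x x'"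
  shows "proj_step S (fst (\<Delta> S T x)) (fst (\<Delta> S T x'))"
    and "proj_step T (snd (\<Delta> S T x)) (snd (\<Delta> S T x'))"
proof -
  obtain A B where x: "x \<in> H (S \<union> T)" and AB: "A \<inter> B = {}" "A \<union> B = S \<union> T" and x': "x' = proj A B x"
    using assms(4) unfolding proj_step_def by blast
  have "\<Delta> S T x' = (proj (A \<inter> S) (B \<inter> S) (fst (\<Delta> S T x)), proj (A \<inter> T) (B \<inter> T) (snd (\<Delta> S T x)))"
    using delta_proj[OF _ x AB assms(3) refl] assms(1,2) x' by simp
  moreover have "fst (\<Delta> S T x) \<in> H S" "snd (\<Delta> S T x) \<in> H T"
    using delta_closed[OF assms(1-3) x] .
  moreover have "(A \<inter> S) \<inter> (B \<inter> S) = {}" "(A \<inter> S) \<union> (B \<inter> S) = S"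
    "(A \<inter> T) \<inter> (B \<inter> T) = {}" "(A \<inter> T) \<union> (B \<inter> T) = T"
    using AB by auto
  ultimately show "proj_step S (fst (\<Delta> S T x)) (fst (\<Delta> S T x'))"
    and "proj_step T (snd (\<Delta> S T x)) (snd (\<Delta> S T x'))"
    unfolding proj_step_def by auto
qed

lemma rl_proj_le: "finite I \<Longrightarrow> inj_on \<sigma> I \<Longrightarrow> proj_le I x x' \<Longrightarrow> proj_le (\<sigma> ` I) (rl \<sigma> I x) (rl \<sigma> I x')"
  unfolding proj_le_def by (erule rtranclp_map[rotated]) (rule rl_proj_step)

lemma m_proj_le:
  assumes "finite S" and "finite T" and "S \<inter> T = {}" and "x \<in> H S" and "y' \<in> H T"
    and "proj_le S x x'" and "proj_le T y y'"
  shows "proj_le (S \<union> T) (m S T x y) (m S T x' y')"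
proof -
  have "(proj_step (S \<union> T))\<^sup>*\<^sup>* (m S T x' y') (m S T x y')"
    using assms(6) unfolding proj_le_def
    by (rule rtranclp_map[rotated]) (rule m_proj_step_left[OF assms(1-3,5)])
  also have "(proj_step (S \<union> T))\<^sup>*\<^sup>* (m S T x y') (m S T x y)"
    using assms(7) unfolding proj_le_def
    by (rule rtranclp_map[rotated]) (rule m_proj_step_right[OF assms(1-4)])
  finally show ?thesis
    unfolding proj_le_def .
qed

lemma delta_proj_le:
  assumes "finite S" and "finite T" and "S \<inter> T = {}" and "proj_le (S \<union> T) x x'"
  shows "prod_le proj_le S T (\<Delta> S T x) (\<Delta> S T x')"
  using assms(4) unfolding prod_le_def proj_le_def
  by (auto elim!: rtranclp_map[rotated] intro: delta_proj_step[OF assms(1-3)])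

lemma proj_le_galois:
  assumes "finite S" and "finite T" and "S \<inter> T = {}" and "x \<in> H (S \<union> T)" and "y \<in> H S" and "z \<in> H T"
  shows "proj_le (S \<union> T) (m S T y z) x \<longleftrightarrow> prod_le proj_le S T (y, z) (\<Delta> S T x)"
proof
  assume "proj_le (S \<union> T) (m S T y z) x"
  then show "prod_le proj_le S T (y, z) (\<Delta> S T x)"
    using delta_proj_le[OF assms(1-3)] delta_m[OF assms(1-3,5,6)] by fastforce
next
  assume "prod_le proj_le S T (y, z) (\<Delta> S T x)"
  then have y: "proj_le S y (fst (\<Delta> S T x))" and z: "proj_le T z (snd (\<Delta> S T x))"
    unfolding prod_le_def by simp_all
  have "proj_step (S \<union> T) x (m S T (fst (\<Delta> S T x)) (snd (\<Delta> S T x)))"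
    unfolding proj_step_def proj_def using assms(3,4) by blast
  moreover have "proj_le (S \<union> T) (m S T y z) (m S T (fst (\<Delta> S T x)) (snd (\<Delta> S T x)))"
    using m_proj_le[OF assms(1-3,5) delta_closed(2)[OF assms(1-4)] y z] .
  ultimately show "proj_le (S \<union> T) (m S T y z) x"
    unfolding proj_le_def by (rule converse_rtranclp_into_rtranclp)
qed

lemma self_adjoint: "self_adjoint H rl m \<Delta>"
  unfolding self_adjoint_def
proof (intro exI[of _ proj_le] conjI allI impI disjI2 ballI)
qed (simp_all add: proj_le_poset rl_proj_le m_proj_le delta_proj_le proj_le_galois)

end

theorem mainTheorem11:
  fixes H :: "'l set \<Rightarrow> 'a set"
    and rl :: "('l \<Rightarrow> 'l) \<Rightarrow> 'l set \<Rightarrow> 'a \<Rightarrow> 'a"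
    and e :: 'a
    and m :: "'l set \<Rightarrow> 'l set \<Rightarrow> 'a \<Rightarrow> 'a \<Rightarrow> 'a"
    and \<Delta> :: "'l set \<Rightarrow> 'l set \<Rightarrow> 'a \<Rightarrow> 'a \<times> 'a"
  assumes "infinite (UNIV :: 'l set)"
    and "set_hopf_monoid H rl e m \<Delta>"
  shows "self_adjoint H rl m \<Delta> \<longleftrightarrow> hopf_commutative H m \<and> hopf_cocommutative H \<Delta>"
proof -
  interpret set_hopf H rl e m \<Delta>
    using assms(2) by (rule set_hopf.intro)
  show ?thesis
  proof
    assume "self_adjoint H rl m \<Delta>"
    then obtain le where "set_hopf_galois H rl e m \<Delta> le"
      by (rule obtain_galois_order)
    then interpret set_hopf_galois H rl e m \<Delta> le .
    show "hopf_commutative H m \<and> hopf_cocommutative H \<Delta>"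
      using hopf_commutative[OF assms(1)] hopf_cocommutative[OF assms(1)] ..
  next
    assume "hopf_commutative H m \<and> hopf_cocommutative H \<Delta>"
    then interpret set_hopf_bicomm H rl e m \<Delta>
      by unfold_locales auto
    show "self_adjoint H rl m \<Delta>"
      by (rule self_adjoint)
  qed
qed

end
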